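(* Let $l\geq 0$ and $d\geq 1$ be integers and let $\boldsymbol{\varepsilon}=(\varepsilon_n)_{n\geq 0}$ be a sequence of non-constant polynomials in $\mathbb{F}_2[t]$ which is ultimately periodic of type $(l,d)$, i.e. $\varepsilon_{n+d}=\varepsilon_n$ for all $n\geq l$. Let $\mathbf{s}(\boldsymbol{\varepsilon})=(s_i)_{i\geq 0}$ be the associated sequence and $\alpha=[s_0,s_1,s_2,\dots]\in\mathbb{F}_2((1/t))$ the associated continued fraction (see context). Then there is a polynomial $P\in \mathbb{F}_2(\boldsymbol{\varepsilon})[x]$ with $\deg_x P=2^d$ and $P(\alpha)=0$. More precisely, setting $\beta=1/\alpha$, there exist $d+1$ elements $A$ and $B_k$ ($0\leq k\leq d-1$) of $\mathbb{F}_2(\boldsymbol{\varepsilon})$ such that $$\beta^{2^d}=A+\sum_{k=0}^{d-1}B_k\,\beta^{2^k}.$$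
   Context: Given a sequence $\boldsymbol{\varepsilon}=(\varepsilon_n)_{n\geq 0}$, define words $W_0=$ empty word and $W_{n+1}=W_n\,\varepsilon_n\,W_n$ (concatenation) for $n\geq 0$; $W_{n+1}$ begins with $W_n$, and $\mathbf{s}(\boldsymbol{\varepsilon})$ is the infinite word beginning with every $W_n$, i.e. $\mathbf{s}(\boldsymbol{\varepsilon})=\varepsilon_0\varepsilon_1\varepsilon_0\varepsilon_2\varepsilon_0\varepsilon_1\varepsilon_0\varepsilon_3\cdots$. When the $\varepsilon_n$ are non-constant polynomials in $\mathbb{F}_2[t]$, $\alpha=CF(\mathbf{s}(\boldsymbol{\varepsilon}))=[s_0,s_1,\dots]=s_0+1/(s_1+1/(s_2+\cdots))$ is the infinite continued fraction in the field $\mathbb{F}_2((1/t))$ of formal Laurent series in $1/t$ with partial quotients $s_i$. For $\boldsymbol{\varepsilon}$ of type $(l,d)$, $\mathbb{F}_2(\boldsymbol{\varepsilon})$ denotes the subfield of $\mathbb{F}_2(t)$ generated by $\varepsilon_0,\dots,\varepsilon_{l+d-1}$. *)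

theory Defs
  imports "HOL-Computational_Algebra.Computational_Algebra" "HOL-Library.Z2"
begin

text \<open>F_2 is the type bit.  F_2((1/t)) is modelled as bit fls (formal Laurent series
  in X = 1/t, finitely many negative powers of X); the metric topology on fls is the
  (1/t)-adic topology.  The variable t is fls_X_inv.\<close>

definition laurent_of_poly :: "bit poly \<Rightarrow> bit fls" where
  "laurent_of_poly p = poly (map_poly fls_const p) fls_X_inv"

fun W :: "(nat \<Rightarrow> 'a) \<Rightarrow> nat \<Rightarrow> 'a list" where
  "W e 0 = []"
| "W e (Suc n) = W e n @ [e n] @ W e n"

text \<open>The infinite word s(eps) beginning with every W_n (length W_(i+1) = 2^(i+1)-1 > i).\<close>
definition sword :: "(nat \<Rightarrow> 'a) \<Rightarrow> nat \<Rightarrow> 'a" where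
  "sword e i = W e (Suc i) ! i"

fun cf_fin :: "(nat \<Rightarrow> 'a::field) \<Rightarrow> nat \<Rightarrow> nat \<Rightarrow> 'a" where
  "cf_fin a i 0 = a i"
| "cf_fin a i (Suc k) = a i + inverse (cf_fin a (Suc i) k)"

definition is_CF :: "'a::{field,metric_space} \<Rightarrow> (nat \<Rightarrow> 'a) \<Rightarrow> bool" where
  "is_CF \<alpha> a \<longleftrightarrow> (\<lambda>n. cf_fin a 0 n) \<longlonglongrightarrow> \<alpha>"

definition is_subfield :: "'a::field set \<Rightarrow> bool" where
  "is_subfield K \<longleftrightarrow> 0 \<in> K \<and> 1 \<in> K \<and> (\<forall>x\<in>K. \<forall>y\<in>K. x + y \<in> K \<and> x * y \<in> K)
     \<and> (\<forall>x\<in>K. - x \<in> K \<and> inverse x \<in> K)"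

definition gen_subfield :: "'a::field set \<Rightarrow> 'a set" where
  "gen_subfield S = \<Inter>{K. is_subfield K \<and> S \<subseteq> K}"

end

theory Submission
  imports Defs
begin

text \<open>
  The prefix W_n of s(\<epsilon>) is a palindrome, so its continuant matrix is symmetric; in characteristic 2
  its entries satisfy x(n+1) = \<epsilon>_n x(n)^2 and y(n+1) = \<epsilon>_n x(n) y(n) + 1. Hence \<beta> = 1/\<alpha> is the
  limit of y(n)/x(n), whose increments u(m) = 1/x(m) satisfy u(m)^2 = \<epsilon>_m u(m+1). Grouping the
  increments beyond l by their residue modulo d gives sums S_0, \<dots>, S_(d-1); by periodicity, squaring
  sends S_r to \<epsilon>_(l+1+r) S_(r+1), and S_d is S_0 up to a constant and a vanishing term. So, up to
  elements of \<bbbF>_2(\<epsilon>) and vanishing terms, \<beta>^(2^k) is a combination of the S_r whose coefficient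
  vector in \<bbbF>_2(\<epsilon>)^d is the k-th iterate of a Frobenius-semilinear map. Among the d + 1 vectors for
  k \<le> d one lies in the span of its predecessors; that span is invariant under the map, so it contains
  the vector for k = d. The resulting relation holds exactly for \<beta>, because a constant that vanishes
  in the limit is zero, and reversing it gives the polynomial for \<alpha>.
\<close>

section \<open>Characteristic two\<close>

lemma CHAR_bit [simp]: "CHAR(bit) = 2"
proof (rule CHAR_eqI)
  fix n assume "of_nat n = (0::bit)"
  then show "2 dvd n" by (induction n) auto
qed simp

lemma two_eq_zero_CHAR_2:
  assumes "CHAR('a::semiring_1) = 2"
  shows "(2::'a) = 0"
  using of_nat_CHAR[where 'a='a] assms by simp

lemma diff_eq_add_CHAR_2:
  fixes x y :: "'a::ring_1"
  assumes "CHAR('a) = 2"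
  shows "x - y = x + y"
  using uminus_CHAR_2[OF assms, of y] by (simp add: diff_conv_add_uminus)

lemma square_add_CHAR_2:
  fixes x y :: "'a::comm_ring_1"
  assumes "CHAR('a) = 2"
  shows "(x + y) ^ 2 = x ^ 2 + y ^ 2"
  by (rule freshmans_dream) (simp_all add: assms)

lemma square_sum_CHAR_2:
  fixes f :: "'b \<Rightarrow> 'a::comm_ring_1"
  assumes "CHAR('a) = 2"
  shows "(\<Sum>i\<in>A. f i) ^ 2 = (\<Sum>i\<in>A. f i ^ 2)"
  by (rule freshmans_dream_sum) (simp_all add: assms)

lemma power_two_power_diff_CHAR_2:
  fixes x y :: "'a::comm_ring_1"
  assumes "CHAR('a) = 2"
  shows "(x - y) ^ (2 ^ k) = x ^ (2 ^ k) - y ^ (2 ^ k)"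
  unfolding diff_eq_add_CHAR_2[OF assms] by (rule freshmans_dream') (simp_all add: assms)

lemma laurent_of_poly_pCons:
  "laurent_of_poly (pCons a p) = fls_const a + fls_X_inv * laurent_of_poly p"
  by (simp add: laurent_of_poly_def map_poly_pCons)

lemma fls_subdegree_laurent_of_poly:
  "p \<noteq> 0 \<Longrightarrow> laurent_of_poly p \<noteq> 0 \<and> fls_subdegree (laurent_of_poly p) = - int (degree p)"
proof (induction p rule: pCons_induct)
  case (pCons a p)
  show ?case
  proof (cases "p = 0")
    case True
    have "laurent_of_poly (pCons a p) = fls_const a"
      unfolding laurent_of_poly_pCons True by (simp add: laurent_of_poly_def)
    then show ?thesis using True pCons.hyps by simp
  next
    case False
    with pCons.IH have "fls_X_inv * laurent_of_poly p \<noteq> 0"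
      and "fls_subdegree (fls_X_inv * laurent_of_poly p) = - int (degree p) - 1"
      by (simp_all add: fls_subdegree_mult_fls_X_inv)
    then have "fls_subdegree (laurent_of_poly (pCons a p)) = - int (degree p) - 1"
      unfolding laurent_of_poly_pCons by (subst fls_subdegree_add_eq2) auto
    moreover from this have "laurent_of_poly (pCons a p) \<noteq> 0"
      by auto
    ultimately show ?thesis using False by simp
  qed
qed simp

lemma laurent_of_poly_nonconstant:
  assumes "degree p > 0"
  shows "laurent_of_poly p \<noteq> 0" "fls_subdegree (laurent_of_poly p) < 0"
proof -
  from assms have "p \<noteq> 0" by auto
  then show "laurent_of_poly p \<noteq> 0" "fls_subdegree (laurent_of_poly p) < 0"
    using fls_subdegree_laurent_of_poly[of p] assms by simp_all
qed

lemma subfield_gen_subfield: "is_subfield (gen_subfield S)"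
  unfolding gen_subfield_def is_subfield_def by auto

lemma gen_subfield_superset: "S \<subseteq> gen_subfield S"
  unfolding gen_subfield_def by auto

locale subfield =
  fixes K :: "'a::field set"
  assumes subfield: "is_subfield K"
begin

lemma subfield_zero: "0 \<in> K" and subfield_one: "1 \<in> K"
  and subfield_add: "x \<in> K \<Longrightarrow> y \<in> K \<Longrightarrow> x + y \<in> K"
  and subfield_mult: "x \<in> K \<Longrightarrow> y \<in> K \<Longrightarrow> x * y \<in> K"
  and subfield_uminus: "x \<in> K \<Longrightarrow> - x \<in> K"
  and subfield_inverse: "x \<in> K \<Longrightarrow> inverse x \<in> K"
  using subfield unfolding is_subfield_def by auto

lemma subfield_diff: "x \<in> K \<Longrightarrow> y \<in> K \<Longrightarrow> x - y \<in> K"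
  by (metis diff_conv_add_uminus subfield_add subfield_uminus)

lemma subfield_divide: "x \<in> K \<Longrightarrow> y \<in> K \<Longrightarrow> x / y \<in> K"
  by (simp add: divide_inverse subfield_mult subfield_inverse)

lemma subfield_power: "x \<in> K \<Longrightarrow> x ^ n \<in> K"
  by (induction n) (auto intro: subfield_mult subfield_one)

lemma subfield_sum: "(\<And>i. i \<in> A \<Longrightarrow> f i \<in> K) \<Longrightarrow> sum f A \<in> K"
  by (induction A rule: infinite_finite_induct) (auto intro: subfield_add subfield_zero)

end

section \<open>Null sequences of Laurent series\<close>

text \<open>The library equips \<open>fls\<close> with a metric but not with a topological ring structure, so
  limits are handled through subdegrees; \<open>LIMSEQ_imp_fls_null\<close> connects the two.\<close>

definition fls_null :: "(nat \<Rightarrow> 'a::zero fls) \<Rightarrow> bool" where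
  "fls_null f \<longleftrightarrow> (\<forall>M. eventually (\<lambda>N. f N = 0 \<or> M \<le> fls_subdegree (f N)) sequentially)"

lemma fls_nullD: "fls_null f \<Longrightarrow> eventually (\<lambda>N. f N = 0 \<or> M \<le> fls_subdegree (f N)) sequentially"
  unfolding fls_null_def by blast

lemma fls_null_zero: "fls_null (\<lambda>N. 0)"
  unfolding fls_null_def by simp

lemma fls_null_add:
  fixes f g :: "nat \<Rightarrow> 'a::group_add fls"
  assumes "fls_null f" "fls_null g"
  shows "fls_null (\<lambda>N. f N + g N)"
  unfolding fls_null_def
proof
  fix M
  from fls_nullD[OF assms(1), of M] fls_nullD[OF assms(2), of M]
  show "eventually (\<lambda>N. f N + g N = 0 \<or> M \<le> fls_subdegree (f N + g N)) sequentially"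
  proof eventually_elim
    case (elim N)
    then show ?case using fls_plus_subdegree[of "f N" "g N"] by fastforce
  qed
qed

lemma fls_null_uminus: "fls_null f \<Longrightarrow> fls_null (\<lambda>N. - f N)"
  unfolding fls_null_def by simp

lemma fls_null_diff:
  fixes f g :: "nat \<Rightarrow> 'a::group_add fls"
  shows "fls_null f \<Longrightarrow> fls_null g \<Longrightarrow> fls_null (\<lambda>N. f N - g N)"
  using fls_null_add[of f "\<lambda>N. - g N"] fls_null_uminus[of g] by simp

lemma fls_null_sum:
  fixes f :: "'b \<Rightarrow> nat \<Rightarrow> 'a::ab_group_add fls"
  shows "(\<And>k. k \<in> A \<Longrightarrow> fls_null (f k)) \<Longrightarrow> fls_null (\<lambda>N. \<Sum>k\<in>A. f k N)"
  by (induction A rule: infinite_finite_induct) (auto intro!: fls_null_add fls_null_zero)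

lemma fls_null_mult_const:
  fixes f :: "nat \<Rightarrow> 'a::field fls"
  assumes "fls_null f"
  shows "fls_null (\<lambda>N. c * f N)"
  unfolding fls_null_def
proof
  fix M
  from fls_nullD[OF assms, of "M - fls_subdegree c"]
  show "eventually (\<lambda>N. c * f N = 0 \<or> M \<le> fls_subdegree (c * f N)) sequentially"
  proof eventually_elim
    case (elim N)
    then show ?case by (cases "c = 0 \<or> f N = 0") auto
  qed
qed

lemma fls_null_power:
  fixes f :: "nat \<Rightarrow> 'a::field fls"
  assumes "fls_null f" "n > 0"
  shows "fls_null (\<lambda>N. f N ^ n)"
  unfolding fls_null_def
proof
  fix M
  from fls_nullD[OF assms(1), of "\<bar>M\<bar>"]
  show "eventually (\<lambda>N. f N ^ n = 0 \<or> M \<le> fls_subdegree (f N ^ n)) sequentially"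
  proof eventually_elim
    case (elim N)
    show ?case
    proof (cases "f N = 0")
      case False
      with elim have "\<bar>M\<bar> \<le> fls_subdegree (f N)" by simp
      moreover have "1 * fls_subdegree (f N) \<le> int n * fls_subdegree (f N)"
        using assms(2) \<open>\<bar>M\<bar> \<le> fls_subdegree (f N)\<close> by (intro mult_right_mono) auto
      ultimately have "M \<le> int n * fls_subdegree (f N)"
        by linarith
      then show ?thesis by (simp add: fls_subdegree_pow)
    qed (use assms(2) in simp)
  qed
qed

lemma fls_null_const: "fls_null (\<lambda>N. c) \<Longrightarrow> c = 0"
  using fls_nullD[of "\<lambda>N. c" "fls_subdegree c + 1"] by auto

lemma fls_null_eventually_cong:
  assumes "fls_null f" "eventually (\<lambda>N. f N = g N) sequentially"
  shows "fls_null g"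
  unfolding fls_null_def
proof
  fix M
  from fls_nullD[OF assms(1), of M] assms(2)
  show "eventually (\<lambda>N. g N = 0 \<or> M \<le> fls_subdegree (g N)) sequentially"
    by eventually_elim auto
qed

lemma fls_null_compose:
  assumes "fls_null f" "filterlim h sequentially sequentially"
  shows "fls_null (\<lambda>N. f (h N))"
  unfolding fls_null_def
  using eventually_compose_filterlim[OF fls_nullD[OF assms(1)] assms(2)] by blast

lemma fls_null_inverse:
  fixes f :: "nat \<Rightarrow> 'a::field fls"
  assumes null: "fls_null (\<lambda>N. f N - a)" and "a \<noteq> 0"
  shows "fls_null (\<lambda>N. inverse (f N) - inverse a)"
  unfolding fls_null_def
proof
  fix M
  define s where "s = fls_subdegree a"
  from fls_nullD[OF null, of "M + 2 * s"] fls_nullD[OF null, of "s + 1"]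
  show "eventually (\<lambda>N. inverse (f N) - inverse a = 0 \<or> M \<le> fls_subdegree (inverse (f N) - inverse a))
      sequentially"
  proof eventually_elim
    case (elim N)
    show ?case
    proof (cases "f N = a")
      case False
      then have "f N - a \<noteq> 0" by simp
      with elim have sub: "s + 1 \<le> fls_subdegree (f N - a)" "M + 2 * s \<le> fls_subdegree (f N - a)"
        by auto
      have "fls_subdegree (a + (f N - a)) = s"
        using sub(1) \<open>a \<noteq> 0\<close> unfolding s_def by (intro fls_subdegree_add_eq1) auto
      then have fN: "fls_subdegree (f N) = s" by simp
      with sub(1) have "f N \<noteq> 0" by (auto simp: s_def)
      then have "inverse (f N) - inverse a = - (f N - a) * inverse (f N) * inverse a"
        using \<open>a \<noteq> 0\<close> by (simp add: field_simps)
      also have "fls_subdegree \<dots> = fls_subdegree (f N - a) - 2 * s"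
        using \<open>f N \<noteq> 0\<close> \<open>f N - a \<noteq> 0\<close> \<open>a \<noteq> 0\<close> fN
        by (simp add: s_def fls_subdegree_minus_sym)
      finally show ?thesis using sub(2) by simp
    qed simp
  qed
qed

lemma LIMSEQ_imp_fls_null:
  fixes f :: "nat \<Rightarrow> 'a::group_add fls"
  assumes "f \<longlonglongrightarrow> L"
  shows "fls_null (\<lambda>N. f N - L)"
  unfolding fls_null_def
proof
  fix M
  have "eventually (\<lambda>N. dist (f N) L < inverse (2 ^ nat M)) sequentially"
    using assms by (rule tendstoD) simp
  then show "eventually (\<lambda>N. f N - L = 0 \<or> M \<le> fls_subdegree (f N - L)) sequentially"
  proof eventually_elim
    case (elim N)
    show ?case
    proof (cases "f N = L")
      case False
      define s where "s = fls_subdegree (f N - L)"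
      have "0 \<le> s"
      proof (rule ccontr)
        assume "\<not> 0 \<le> s"
        with elim False have "2 ^ nat (- s) < inverse ((2::real) ^ nat M)"
          by (simp add: dist_fls_def s_def)
        moreover have "inverse ((2::real) ^ nat M) \<le> 1" "1 \<le> (2::real) ^ nat (- s)"
          by (simp_all add: inverse_le_1_iff)
        ultimately show False by linarith
      qed
      with elim False have "inverse (2 ^ nat s) < inverse ((2::real) ^ nat M)"
        by (simp add: dist_fls_def s_def)
      then have "nat M < nat s" by simp
      then show ?thesis unfolding s_def by linarith
    qed simp
  qed
qed

section \<open>Continuants and the palindromes \<open>W\<^sub>n\<close>\<close>

text \<open>A quadruple \<open>(p, q, r, s)\<close> stands for the matrix with rows \<open>(p, q)\<close> and \<open>(r, s)\<close>. For a word
  \<open>a\<^sub>0 \<dots> a\<^sub>k\<close> the product of the matrices with rows \<open>(a\<^sub>i, 1)\<close> and \<open>(1, 0)\<close> has first column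
  (numerator, denominator) of the continued fraction \<open>[a\<^sub>0, \<dots>, a\<^sub>k]\<close>.\<close>

type_synonym 'a mat2 = "'a \<times> 'a \<times> 'a \<times> 'a"

fun mat2_mult :: "'a::semiring_1 mat2 \<Rightarrow> 'a mat2 \<Rightarrow> 'a mat2" where
  "mat2_mult (p, q, r, s) (p', q', r', s') = (p*p' + q*r', p*q' + q*s', r*p' + s*r', r*q' + s*s')"

fun continuant_matrix :: "'a::semiring_1 list \<Rightarrow> 'a mat2" where
  "continuant_matrix [] = (1, 0, 0, 1)"
| "continuant_matrix (a # w) = mat2_mult (a, 1, 1, 0) (continuant_matrix w)"

lemma mat2_mult_assoc: "mat2_mult (mat2_mult A B) C = mat2_mult A (mat2_mult B C)"
  by (cases A; cases B; cases C) (simp add: algebra_simps)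

lemma mat2_mult_one_left: "mat2_mult (1, 0, 0, 1) A = A"
  by (cases A) simp

lemma continuant_matrix_append:
  "continuant_matrix (u @ v) = mat2_mult (continuant_matrix u) (continuant_matrix v)"
  by (induction u) (simp_all add: mat2_mult_one_left mat2_mult_assoc)

lemma cf_fin_continuant_matrix:
  fixes a :: "nat \<Rightarrow> 'a::field"
  assumes nonzero: "\<And>j k. cf_fin a j k \<noteq> 0"
    and "continuant_matrix (map a [i..<Suc (i + k)]) = (p, q, r, s)"
  shows "cf_fin a i k = p / r \<and> r \<noteq> 0"
  using assms(2)
proof (induction k arbitrary: i p q r s)
  case (Suc k)
  obtain p' q' r' s' where M: "continuant_matrix (map a [Suc i..<Suc (Suc i + k)]) = (p', q', r', s')"
    by (metis prod_cases4)
  with Suc.IH have IH: "cf_fin a (Suc i) k = p' / r'" "r' \<noteq> 0" by blast+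
  then have "p' \<noteq> 0" using nonzero[of "Suc i" k] by auto
  have "[i..<Suc (i + Suc k)] = i # [Suc i..<Suc (Suc i + k)]"
    by (simp add: upt_conv_Cons)
  then have "continuant_matrix (map a [i..<Suc (i + Suc k)]) = mat2_mult (a i, 1, 1, 0) (p', q', r', s')"
    by (simp only: list.map continuant_matrix.simps M)
  with Suc.prems have "p = a i * p' + r'" "r = p'"
    by simp_all
  have "cf_fin a i (Suc k) = a i + r' / p'"
    using IH(1) by simp
  also have "\<dots> = p / r"
    using \<open>p' \<noteq> 0\<close> \<open>p = a i * p' + r'\<close> \<open>r = p'\<close> by (simp add: field_simps)
  finally show ?case using \<open>p' \<noteq> 0\<close> \<open>r = p'\<close> by simp
qed simp

lemma fls_subdegree_cf_fin:
  fixes a :: "nat \<Rightarrow> 'a::field fls"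
  assumes "\<And>i. fls_subdegree (a i) < 0"
  shows "fls_subdegree (cf_fin a i k) = fls_subdegree (a i)"
proof (induction k arbitrary: i)
  case (Suc k)
  show ?case
    unfolding cf_fin.simps
    by (rule fls_subdegree_add_eq1) (use assms[of i] assms[of "Suc i"] Suc[of "Suc i"] in auto)
qed simp

lemma length_W: "length (W e n) = 2 ^ n - 1"
proof (induction n)
  case (Suc n)
  have "(1::nat) \<le> 2 ^ n" by simp
  with Suc show ?case by simp
qed simp

lemma W_prefix: "m \<le> n \<Longrightarrow> \<exists>r. W e n = W e m @ r"
proof (induction n rule: dec_induct)
  case (step n)
  then show ?case by auto
qed simp

lemma nth_W_independent:
  assumes "i < length (W e m)" "m \<le> n"
  shows "W e n ! i = W e m ! i"
  using W_prefix[OF assms(2), of e] assms(1) by (auto simp: nth_append)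

lemma length_W_Suc_gt: "i < length (W e (Suc i))"
proof -
  have "i < 2 ^ i" by (rule less_exp)
  then have "i < 2 * 2 ^ i - 1" by linarith
  then show ?thesis by (simp add: length_W)
qed

lemma sword_eq_nth_W:
  assumes "i < length (W e n)"
  shows "sword e i = W e n ! i"
  unfolding sword_def using nth_W_independent[OF length_W_Suc_gt] nth_W_independent[OF assms]
  by (metis nat_le_linear)

lemma set_W: "set (W e n) \<subseteq> range e"
  by (induction n) auto

lemma sword_in_range: "sword e i \<in> range e"
  unfolding sword_def using set_W length_W_Suc_gt by (metis nth_mem subsetD)

lemma map_W: "map f (W e n) = W (f \<circ> e) n"
  by (induction n) simp_all

lemma sword_comp: "sword (f \<circ> e) i = f (sword e i)"
  by (simp only: sword_def map_W[symmetric] nth_map[OF length_W_Suc_gt])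

primrec W_x :: "(nat \<Rightarrow> 'a::comm_ring_1) \<Rightarrow> nat \<Rightarrow> 'a" where
  "W_x a 0 = 1"
| "W_x a (Suc n) = a n * W_x a n ^ 2"

primrec W_y :: "(nat \<Rightarrow> 'a::comm_ring_1) \<Rightarrow> nat \<Rightarrow> 'a" where
  "W_y a 0 = 0"
| "W_y a (Suc n) = a n * W_x a n * W_y a n + 1"

primrec W_z :: "(nat \<Rightarrow> 'a::comm_ring_1) \<Rightarrow> nat \<Rightarrow> 'a" where
  "W_z a 0 = 1"
| "W_z a (Suc n) = a n * W_y a n ^ 2"

lemma continuant_matrix_W:
  fixes a :: "nat \<Rightarrow> 'a::comm_ring_1"
  assumes "CHAR('a) = 2"
  shows "continuant_matrix (W a n) = (W_x a n, W_y a n, W_y a n, W_z a n)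
    \<and> W_x a n * W_z a n + W_y a n ^ 2 = 1"
proof (induction n)
  case (Suc n)
  define x y z where "x = W_x a n" and "y = W_y a n" and "z = W_z a n"
  have two: "(2::'a) = 0"
    by (rule two_eq_zero_CHAR_2[OF assms])
  from Suc have M: "continuant_matrix (W a n) = (x, y, y, z)" and det: "x * z + y ^ 2 = 1"
    by (simp_all add: x_def y_def z_def)
  have "continuant_matrix (W a (Suc n)) = mat2_mult (x, y, y, z) (mat2_mult (a n, 1, 1, 0) (x, y, y, z))"
    by (simp only: W.simps continuant_matrix_append M append.simps continuant_matrix.simps
        mat2_mult_one_left)
  also have "\<dots> = (a n * x ^ 2 + 2 * (x * y), a n * x * y + (x * z + y ^ 2),
      a n * x * y + (x * z + y ^ 2), a n * y ^ 2 + 2 * (y * z))"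
    by (simp add: algebra_simps power2_eq_square mult_2)
  also have "\<dots> = (a n * x ^ 2, a n * x * y + 1, a n * x * y + 1, a n * y ^ 2)"
    using two det by simp
  finally have matrix: "continuant_matrix (W a (Suc n))
      = (a n * x ^ 2, a n * x * y + 1, a n * x * y + 1, a n * y ^ 2)" .
  have "a n * x ^ 2 * (a n * y ^ 2) + (a n * x * y + 1) ^ 2
      = 1 + 2 * (a n * x * y + (a n * x * y) ^ 2)"
    by (simp add: algebra_simps power2_eq_square mult_2)
  with two have "a n * x ^ 2 * (a n * y ^ 2) + (a n * x * y + 1) ^ 2 = 1"
    by simp
  with matrix show ?case
    by (simp add: x_def y_def z_def mult.assoc)
qed simp

lemma map_sword_W: "map (sword e) [0..<length (W e n)] = W e n"
  by (rule nth_equalityI) (simp_all add: sword_eq_nth_W)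

lemma cf_fin_sword_W:
  fixes e :: "nat \<Rightarrow> 'a::field"
  assumes "CHAR('a) = 2" and nonzero: "\<And>j k. cf_fin (sword e) j k \<noteq> 0" and "n \<ge> 1"
  shows "cf_fin (sword e) 0 (2 ^ n - 2) = W_x e n / W_y e n"
proof -
  have "(2::nat) ^ 1 \<le> 2 ^ n"
    using \<open>n \<ge> 1\<close> by (rule power_increasing) simp
  then have len: "Suc (0 + (2 ^ n - 2)) = length (W e n)"
    by (simp add: length_W)
  then have "continuant_matrix (map (sword e) [0..<Suc (0 + (2 ^ n - 2))])
      = (W_x e n, W_y e n, W_y e n, W_z e n)"
    unfolding len map_sword_W using continuant_matrix_W[OF assms(1)] by blast
  then show ?thesis
    using cf_fin_continuant_matrix[OF nonzero] by blast
qed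

section \<open>Linear dependence over a subfield\<close>

definition lin_comb :: "'a::field set \<Rightarrow> (nat \<Rightarrow> 'b \<Rightarrow> 'a) \<Rightarrow> nat \<Rightarrow> ('b \<Rightarrow> 'a) set" where
  "lin_comb K v m = {x. \<exists>c. (\<forall>k<m. c k \<in> K) \<and> x = (\<lambda>r. \<Sum>k<m. c k * v k r)}"

context subfield
begin

lemma lin_comb_zero: "(\<lambda>r. 0) \<in> lin_comb K v m"
  unfolding lin_comb_def by (rule CollectI, rule exI[of _ "\<lambda>k. 0"]) (simp add: subfield_zero)

lemma lin_comb_add:
  assumes "x \<in> lin_comb K v m" "y \<in> lin_comb K v m"
  shows "(\<lambda>r. x r + y r) \<in> lin_comb K v m"
proof -
  obtain b c where "\<forall>k<m. b k \<in> K" "x = (\<lambda>r. \<Sum>k<m. b k * v k r)"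
    and "\<forall>k<m. c k \<in> K" "y = (\<lambda>r. \<Sum>k<m. c k * v k r)"
    using assms unfolding lin_comb_def by blast
  then show ?thesis unfolding lin_comb_def
    by (intro CollectI exI[of _ "\<lambda>k. b k + c k"])
       (auto simp: subfield_add sum.distrib distrib_right)
qed

lemma lin_comb_scale:
  assumes "a \<in> K" "x \<in> lin_comb K v m"
  shows "(\<lambda>r. a * x r) \<in> lin_comb K v m"
proof -
  obtain b where "\<forall>k<m. b k \<in> K" "x = (\<lambda>r. \<Sum>k<m. b k * v k r)"
    using assms unfolding lin_comb_def by blast
  with assms(1) show ?thesis unfolding lin_comb_def
    by (intro CollectI exI[of _ "\<lambda>k. a * b k"])
       (auto simp: subfield_mult sum_distrib_left mult.assoc)
qed

lemma lin_comb_diff: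
  assumes "x \<in> lin_comb K v m" "y \<in> lin_comb K v m"
  shows "(\<lambda>r. x r - y r) \<in> lin_comb K v m"
  using lin_comb_add[OF assms(1) lin_comb_scale[OF _ assms(2), of "- 1"]]
  by (simp add: subfield_uminus subfield_one)

lemma lin_comb_generator:
  assumes "k < m"
  shows "v k \<in> lin_comb K v m"
  unfolding lin_comb_def
proof (intro CollectI exI conjI)
  show "\<forall>j<m. (if j = k then 1 else 0) \<in> K"
    by (simp add: subfield_zero subfield_one)
  show "v k = (\<lambda>r. \<Sum>j<m. (if j = k then 1 else 0) * v j r)"
    using assms by (simp add: if_distrib[of "\<lambda>c. c * _"] cong: if_cong)
qed

lemma lin_comb_trans:
  assumes w: "\<And>k. k < m \<Longrightarrow> w k \<in> lin_comb K v m'" and x: "x \<in> lin_comb K w m"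
  shows "x \<in> lin_comb K v m'"
proof -
  have "(\<lambda>r. \<Sum>k<j. b k * w k r) \<in> lin_comb K v m'" if "j \<le> m" "\<forall>k<j. b k \<in> K" for j b
    using that
  proof (induction j)
    case (Suc j)
    then have "(\<lambda>r. (\<Sum>k<j. b k * w k r) + b j * w j r) \<in> lin_comb K v m'"
      by (intro lin_comb_add lin_comb_scale w) auto
    then show ?case by simp
  qed (simp add: lin_comb_zero)
  with x show ?thesis unfolding lin_comb_def[of K w m] by auto
qed

lemma lin_comb_mono: "m \<le> m' \<Longrightarrow> x \<in> lin_comb K v m \<Longrightarrow> x \<in> lin_comb K v m'"
  by (rule lin_comb_trans) (auto intro: lin_comb_generator)

lemma lin_comb_after_elimination:
  fixes v v' :: "nat \<Rightarrow> 'b \<Rightarrow> 'a"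
  assumes v': "\<And>k. v' k = (if k < k0 then v k else (\<lambda>r. v (Suc k) r - c k * v k0 r))"
    and c: "\<And>k. k \<le> m \<Longrightarrow> c k \<in> K"
    and m: "v' m \<in> lin_comb K v' m"
  shows "\<exists>j\<le>Suc m. v j \<in> lin_comb K v j"
proof (cases "m < k0")
  case True
  from m True have "v m \<in> lin_comb K v' m" by (simp add: v')
  then have "v m \<in> lin_comb K v m"
    by (rule lin_comb_trans[rotated]) (use True v' in \<open>auto intro: lin_comb_generator\<close>)
  then show ?thesis using le_SucI by blast
next
  case False
  have k0: "v k0 \<in> lin_comb K v (Suc m)"
    using False by (intro lin_comb_generator) simp
  have "v' k \<in> lin_comb K v (Suc m)" if "k < m" for k
    using that c k0 by (cases "k < k0") (auto simp: v' intro!: lin_comb_diff lin_comb_scale lin_comb_generator)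
  then have "v' m \<in> lin_comb K v (Suc m)"
    by (rule lin_comb_trans[OF _ m]) auto
  then have "(\<lambda>r. (v (Suc m) r - c m * v k0 r) + c m * v k0 r) \<in> lin_comb K v (Suc m)"
    using False c k0 by (intro lin_comb_add lin_comb_scale) (auto simp: v')
  then show ?thesis by (intro exI[of _ "Suc m"]) auto
qed

lemma exists_vector_in_lin_comb_of_predecessors:
  fixes v :: "nat \<Rightarrow> nat \<Rightarrow> 'a"
  assumes "\<And>k r. k \<le> n \<Longrightarrow> v k r \<in> K" and "\<And>k r. k \<le> n \<Longrightarrow> n \<le> r \<Longrightarrow> v k r = 0"
  shows "\<exists>m\<le>n. v m \<in> lin_comb K v m"
  using assms
proof (induction n arbitrary: v)
  case 0
  then have "v 0 = (\<lambda>r. 0)" by auto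
  then show ?case using lin_comb_zero[of v 0] by auto
next
  case (Suc n)
  show ?case
  proof (cases "\<forall>k\<le>n. v k n = 0")
    case True
    have "\<exists>m\<le>n. v m \<in> lin_comb K v m"
    proof (rule Suc.IH[of v])
      show "v k r \<in> K" if "k \<le> n" for k r
        using that Suc.prems(1) by simp
      show "v k r = 0" if "k \<le> n" "n \<le> r" for k r
        using that True Suc.prems(2)[of k r] by (cases "r = n") auto
    qed
    then show ?thesis using le_SucI by blast
  next
    case False
    \<comment> \<open>clear coordinate \<open>n\<close> with the first vector \<open>v k0\<close> not vanishing there, dropping \<open>v k0\<close>\<close>
    define k0 where "k0 = (LEAST k. k \<le> n \<and> v k n \<noteq> 0)"
    have k0: "k0 \<le> n" "v k0 n \<noteq> 0"
      using False LeastI_ex[of "\<lambda>k. k \<le> n \<and> v k n \<noteq> 0"] unfolding k0_def by auto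
    have below: "v k n = 0" if "k < k0" for k
      using not_less_Least[of k "\<lambda>k. k \<le> n \<and> v k n \<noteq> 0"] that k0 unfolding k0_def[symmetric]
      by auto
    define c where "c k = v (Suc k) n / v k0 n" for k
    define v' where "v' k = (if k < k0 then v k else (\<lambda>r. v (Suc k) r - c k * v k0 r))" for k
    have c: "c k \<in> K" if "k \<le> n" for k
      unfolding c_def using that k0 Suc.prems(1) by (intro subfield_divide) auto
    have "\<exists>m\<le>n. v' m \<in> lin_comb K v' m"
    proof (rule Suc.IH[of v'])
      show "v' k r \<in> K" if "k \<le> n" for k r
        using that Suc.prems(1) c k0 by (auto simp: v'_def intro!: subfield_diff subfield_mult)
      show "v' k r = 0" if "k \<le> n" "n \<le> r" for k r
        using that Suc.prems(2) below k0 by (cases "r = n") (auto simp: v'_def c_def)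
    qed
    then obtain m where "m \<le> n" "v' m \<in> lin_comb K v' m" by blast
    with c have "\<exists>j\<le>Suc m. v j \<in> lin_comb K v j"
      by (intro lin_comb_after_elimination[OF v'_def]) auto
    with \<open>m \<le> n\<close> show ?thesis by (meson Suc_le_mono order_trans)
  qed
qed

lemma semilinear_orbit_relation:
  fixes T :: "(nat \<Rightarrow> 'a) \<Rightarrow> nat \<Rightarrow> 'a" and V :: "nat \<Rightarrow> nat \<Rightarrow> 'a"
  assumes T: "\<And>v m x. x \<in> lin_comb K v m \<Longrightarrow> T x \<in> lin_comb K (\<lambda>k. T (v k)) m"
    and V_Suc: "\<And>k. V (Suc k) = T (V k)"
    and V_K: "\<And>k r. V k r \<in> K" and V_support: "\<And>k r. d \<le> r \<Longrightarrow> V k r = 0"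
  shows "\<exists>B. (\<forall>k<d. B k \<in> K) \<and> V d = (\<lambda>r. \<Sum>k<d. B k * V k r)"
proof -
  obtain m where m: "m \<le> d" "V m \<in> lin_comb K V m"
    using exists_vector_in_lin_comb_of_predecessors[of d V] V_K V_support by blast
  have "V (m + j) \<in> lin_comb K V m" for j
  proof (induction j)
    case (Suc j)
    have "V (m + Suc j) \<in> lin_comb K (\<lambda>k. V (Suc k)) m"
      using T[OF Suc] by (simp add: V_Suc)
    moreover have "V (Suc k) \<in> lin_comb K V m" if "k < m" for k
      using that m(2) by (cases "Suc k = m") (auto intro: lin_comb_generator)
    ultimately show ?case by (rule lin_comb_trans[rotated]) auto
  qed (use m in simp)
  from this[of "d - m"] m(1) have "V d \<in> lin_comb K V m" by simp
  with m(1) have "V d \<in> lin_comb K V d" by (rule lin_comb_mono)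
  then show ?thesis unfolding lin_comb_def by auto
qed

end

section \<open>The reciprocal of the continued fraction\<close>

locale nonconstant_quotients =
  fixes eps :: "nat \<Rightarrow> bit poly"
  assumes nonconst: "\<And>n. degree (eps n) > 0"
begin

definition e :: "nat \<Rightarrow> bit fls" where
  "e n = laurent_of_poly (eps n)"

lemma e_nonzero: "e n \<noteq> 0" and e_subdegree: "fls_subdegree (e n) < 0"
  unfolding e_def using laurent_of_poly_nonconstant[OF nonconst] by auto

lemma sword_e: "sword e i = laurent_of_poly (sword eps i)"
  using sword_comp[of laurent_of_poly eps i] by (simp add: e_def[abs_def] comp_def)

lemma fls_subdegree_sword_e: "fls_subdegree (sword e i) < 0"
  using sword_in_range[of e i] e_subdegree by auto

lemma fls_subdegree_cf_fin_sword_e: "fls_subdegree (cf_fin (sword e) j k) = fls_subdegree (sword e j)"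
  by (rule fls_subdegree_cf_fin) (rule fls_subdegree_sword_e)

lemma cf_fin_sword_e_nonzero: "cf_fin (sword e) j k \<noteq> 0"
  using fls_subdegree_cf_fin_sword_e[of j k] fls_subdegree_sword_e[of j] by auto

lemma W_x_e_nonzero: "W_x e n \<noteq> 0"
  by (induction n) (simp_all add: e_nonzero)

lemma fls_subdegree_W_x_e: "fls_subdegree (W_x e n) \<le> - int n"
proof (induction n)
  case (Suc n)
  then show ?case
    using e_nonzero[of n] e_subdegree[of n] W_x_e_nonzero[of n] by (simp add: fls_subdegree_pow)
qed simp

definition u :: "nat \<Rightarrow> bit fls" where
  "u n = inverse (W_x e n)"

lemma fls_subdegree_u: "int n \<le> fls_subdegree (u n)"
  unfolding u_def using fls_subdegree_W_x_e[of n] by simp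

lemma fls_null_u: "fls_null u"
  unfolding fls_null_def eventually_sequentially
proof
  fix M :: int
  have "M \<le> fls_subdegree (u n)" if "nat M \<le> n" for n
    using that fls_subdegree_u[of n] by linarith
  then show "\<exists>N0. \<forall>n\<ge>N0. u n = 0 \<or> M \<le> fls_subdegree (u n)" by blast
qed

lemma u_square: "u n ^ 2 = e n * u (Suc n)"
  unfolding u_def using W_x_e_nonzero[of n] e_nonzero[of n] by (simp add: field_simps power2_eq_square)

text \<open>\<open>b n\<close> is the reciprocal of the convergent given by the prefix \<open>W n\<close> of \<open>s(\<epsilon>)\<close>
  (see \<open>cf_fin_sword_W\<close>), and \<open>u\<close> lists its increments.\<close>

definition b :: "nat \<Rightarrow> bit fls" where
  "b n = W_y e n / W_x e n"

lemma b_Suc: "b (Suc n) = b n + u (Suc n)"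
  unfolding b_def u_def using W_x_e_nonzero[of n] e_nonzero[of n]
  by (simp add: field_simps power2_eq_square)

lemma b_add: "b (m + k) = b m + (\<Sum>r<k. u (m + 1 + r))"
  by (induction k) (simp_all add: b_Suc)

lemma fls_null_b:
  assumes "is_CF \<alpha> (\<lambda>i. laurent_of_poly (sword eps i))"
  shows "\<alpha> \<noteq> 0" and "fls_null (\<lambda>n. b n - inverse \<alpha>)"
proof -
  have null: "fls_null (\<lambda>k. cf_fin (sword e) 0 k - \<alpha>)"
    using assms unfolding is_CF_def sword_e[symmetric] by (rule LIMSEQ_imp_fls_null)
  show "\<alpha> \<noteq> 0"
  proof
    assume "\<alpha> = 0"
    with fls_nullD[OF null, of 0] obtain k where "0 \<le> fls_subdegree (cf_fin (sword e) 0 k)"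
      using cf_fin_sword_e_nonzero by (auto simp: eventually_sequentially)
    then show False
      using fls_subdegree_cf_fin_sword_e[of 0 k] fls_subdegree_sword_e[of 0] by simp
  qed
  then have "fls_null (\<lambda>k. inverse (cf_fin (sword e) 0 k) - inverse \<alpha>)"
    by (rule fls_null_inverse[OF null])
  moreover have "filterlim (\<lambda>n. 2 ^ n - 2 :: nat) sequentially sequentially"
    unfolding filterlim_at_top
  proof
    fix Z :: nat
    have "Z \<le> 2 ^ n - 2" if "Z + 2 \<le> n" for n
      using that less_exp[of n] by linarith
    then show "eventually (\<lambda>n. Z \<le> 2 ^ n - 2) sequentially"
      unfolding eventually_sequentially by blast
  qed
  ultimately have "fls_null (\<lambda>n. inverse (cf_fin (sword e) 0 (2 ^ n - 2)) - inverse \<alpha>)"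
    by (rule fls_null_compose)
  moreover have "eventually (\<lambda>n. inverse (cf_fin (sword e) 0 (2 ^ n - 2)) - inverse \<alpha>
      = b n - inverse \<alpha>) sequentially"
    unfolding eventually_sequentially b_def
    using cf_fin_sword_W[OF _ cf_fin_sword_e_nonzero] by (intro exI[of _ 1]) simp
  ultimately show "fls_null (\<lambda>n. b n - inverse \<alpha>)"
    by (rule fls_null_eventually_cong)
qed

end

lemma sum_lessThan_last:
  fixes f :: "nat \<Rightarrow> 'a::comm_monoid_add"
  shows "0 < n \<Longrightarrow> (\<Sum>r<n. f r) = (\<Sum>r<n - 1. f r) + f (n - 1)"
  by (cases n) simp_all

lemma sum_lessThan_first:
  fixes f :: "nat \<Rightarrow> 'a::comm_monoid_add"
  shows "0 < n \<Longrightarrow> (\<Sum>r<n. f r) = f 0 + (\<Sum>r<n - 1. f (Suc r))"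
  by (cases n) (simp_all del: sum.lessThan_Suc add: sum.lessThan_Suc_shift)

lemma filterlim_arith_progression:
  "0 < d \<Longrightarrow> filterlim (\<lambda>N. a + N * d :: nat) sequentially sequentially"
  by (intro filterlim_subseq) (simp add: strict_mono_Suc_iff)

locale ultimately_periodic_quotients = nonconstant_quotients +
  fixes l d :: nat
  assumes d_pos: "d \<ge> 1"
    and periodic: "\<And>n. n \<ge> l \<Longrightarrow> eps (n + d) = eps n"
begin

definition K :: "bit fls set" where
  "K = gen_subfield (laurent_of_poly ` eps ` {..<l + d})"

sublocale subfield K
  unfolding K_def by unfold_locales (rule subfield_gen_subfield)

lemma eps_periodic: "n \<ge> l \<Longrightarrow> eps (n + j * d) = eps n"
proof (induction j)
  case (Suc j)
  have "eps (n + Suc j * d) = eps ((n + j * d) + d)" by (simp add: algebra_simps)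
  with Suc show ?case by (simp add: periodic)
qed simp

lemma e_in_K: "e n \<in> K"
proof -
  obtain m where "m < l + d" "eps n = eps m"
  proof (cases "n < l + d")
    case False
    define q r where "q = (n - l) div d" and "r = (n - l) mod d"
    have "(l + r) + q * d = n"
      using False mod_div_mult_eq[of "n - l" d] unfolding q_def r_def by linarith
    moreover have "eps ((l + r) + q * d) = eps (l + r)"
      by (rule eps_periodic) simp
    moreover have "l + r < l + d"
      using d_pos unfolding r_def by simp
    ultimately show ?thesis using that by metis
  qed (use that in blast)
  then have "e n \<in> laurent_of_poly ` eps ` {..<l + d}"
    unfolding e_def by auto
  then show ?thesis
    unfolding K_def by (rule subsetD[OF gen_subfield_superset])
qed

lemma W_x_e_in_K: "W_x e n \<in> K"
  by (induction n) (simp_all add: subfield_one subfield_mult subfield_power e_in_K)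

lemma u_in_K: "u n \<in> K"
  unfolding u_def by (rule subfield_inverse[OF W_x_e_in_K])

lemma b_in_K: "b n \<in> K"
proof (induction n)
  case 0
  show ?case by (simp add: b_def subfield_zero)
next
  case (Suc n)
  then show ?case by (simp add: b_Suc subfield_add u_in_K)
qed

definition S :: "nat \<Rightarrow> nat \<Rightarrow> bit fls" where
  "S r N = (\<Sum>j<N. u (l + 1 + r + j * d))"

lemma b_decomposition: "b (l + N * d) = b l + (\<Sum>r<d. S r N)"
proof (induction N)
  case (Suc N)
  have "b (l + Suc N * d) = b (l + N * d) + (\<Sum>r<d. u (l + N * d + 1 + r))"
    using b_add[of "l + N * d" d] by (simp add: algebra_simps)
  also have "\<dots> = b l + (\<Sum>r<d. S r N + u (l + 1 + r + N * d))"
    by (simp add: Suc sum.distrib algebra_simps)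
  finally show ?case by (simp add: S_def)
qed (simp add: S_def)

lemma S_square: "S r N ^ 2 = e (l + 1 + r) * S (Suc r) N"
proof -
  have "S r N ^ 2 = (\<Sum>j<N. u (l + 1 + r + j * d) ^ 2)"
    unfolding S_def by (simp add: square_sum_CHAR_2)
  also have "\<dots> = (\<Sum>j<N. e (l + 1 + r) * u (l + 1 + Suc r + j * d))"
  proof (intro sum.cong refl)
    fix j
    have "eps (l + 1 + r + j * d) = eps (l + 1 + r)" by (rule eps_periodic) simp
    then show "u (l + 1 + r + j * d) ^ 2 = e (l + 1 + r) * u (l + 1 + Suc r + j * d)"
      by (simp add: u_square e_def)
  qed
  finally show ?thesis by (simp add: S_def sum_distrib_left)
qed

lemma S_period: "S d N = S 0 N + u (l + 1 + N * d) - u (l + 1)"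
proof -
  have "S d N = (\<Sum>j<N. u (l + 1 + Suc j * d))"
    unfolding S_def by (intro sum.cong) (simp_all add: algebra_simps)
  also have "\<dots> = (\<Sum>j<Suc N. u (l + 1 + j * d)) - u (l + 1)"
    by (subst sum.lessThan_Suc_shift) simp
  finally show ?thesis by (simp add: S_def)
qed

definition S_comb :: "(nat \<Rightarrow> bit fls) \<Rightarrow> nat \<Rightarrow> bit fls" where
  "S_comb v N = (\<Sum>r<d. v r * S r N)"

lemma S_comb_lin_comb: "S_comb (\<lambda>r. \<Sum>k<m. B k * v k r) N = (\<Sum>k<m. B k * S_comb (v k) N)"
proof -
  have "S_comb (\<lambda>r. \<Sum>k<m. B k * v k r) N = (\<Sum>r<d. \<Sum>k<m. B k * v k r * S r N)"
    unfolding S_comb_def by (simp add: sum_distrib_right)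
  also have "\<dots> = (\<Sum>k<m. \<Sum>r<d. B k * v k r * S r N)"
    by (rule sum.swap)
  finally show ?thesis
    unfolding S_comb_def by (simp add: sum_distrib_left mult.assoc)
qed

text \<open>Squaring \<open>S_comb v N\<close> yields \<open>S_comb (twist v) N\<close> up to a constant and a null sequence:
  \<open>S_square\<close> shifts the index, and \<open>S_period\<close> wraps \<open>S d\<close> around to \<open>S 0\<close>.\<close>

definition twist :: "(nat \<Rightarrow> bit fls) \<Rightarrow> nat \<Rightarrow> bit fls" where
  "twist v r = (if r < d then v (if r = 0 then d - 1 else r - 1) ^ 2 * e (l + (if r = 0 then d else r))
    else 0)"

lemma twist_lin_comb:
  assumes "x \<in> lin_comb K v m"
  shows "twist x \<in> lin_comb K (\<lambda>k. twist (v k)) m"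
proof -
  obtain a where a: "\<forall>k<m. a k \<in> K" "x = (\<lambda>r. \<Sum>k<m. a k * v k r)"
    using assms unfolding lin_comb_def by blast
  have "twist x = (\<lambda>r. \<Sum>k<m. a k ^ 2 * twist (v k) r)"
    by (rule ext) (simp add: twist_def a(2) square_sum_CHAR_2 power_mult_distrib sum_distrib_right
        mult.assoc)
  with a(1) show ?thesis
    unfolding lin_comb_def by (intro CollectI exI[of _ "\<lambda>k. a k ^ 2"]) (auto intro: subfield_power)
qed

lemma square_S_comb:
  "S_comb v N ^ 2 = S_comb (twist v) N + v (d - 1) ^ 2 * e (l + d) * (u (l + 1 + N * d) - u (l + 1))"
proof -
  have d: "Suc (d - 1) = d" "l + Suc (d - 1) = l + d" "0 < d" using d_pos by simp_all
  have "(\<Sum>r<d. v r * S r N) ^ 2 = (\<Sum>r<d. v r ^ 2 * e (l + Suc r) * S (Suc r) N)"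
    by (simp add: square_sum_CHAR_2 power_mult_distrib S_square mult.assoc)
  also have "\<dots> = (\<Sum>r<d - 1. v r ^ 2 * e (l + Suc r) * S (Suc r) N) + v (d - 1) ^ 2 * e (l + d) * S d N"
    by (subst sum_lessThan_last[OF d(3)]) (simp only: d(1,2))
  also have "(\<Sum>r<d - 1. v r ^ 2 * e (l + Suc r) * S (Suc r) N) = (\<Sum>r<d - 1. twist v (Suc r) * S (Suc r) N)"
    by (intro sum.cong) (simp_all add: twist_def)
  also have "\<dots> = (\<Sum>r<d. twist v r * S r N) - v (d - 1) ^ 2 * e (l + d) * S 0 N"
    by (subst sum_lessThan_first[OF d(3)]) (simp add: twist_def d(3))
  finally show ?thesis
    by (simp add: S_comb_def S_period algebra_simps)
qed

primrec V :: "nat \<Rightarrow> nat \<Rightarrow> bit fls" where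
  "V 0 = (\<lambda>r. if r < d then 1 else 0)"
| "V (Suc k) = twist (V k)"

primrec c :: "nat \<Rightarrow> bit fls" where
  "c 0 = b l"
| "c (Suc k) = c k ^ 2 - V k (d - 1) ^ 2 * e (l + d) * u (l + 1)"

lemma V_in_K: "V k r \<in> K"
  by (induction k arbitrary: r)
     (simp_all add: twist_def subfield_zero subfield_one subfield_mult
       subfield_power e_in_K)

lemma V_support: "d \<le> r \<Longrightarrow> V k r = 0"
  by (cases k) (simp_all add: twist_def)

lemma c_in_K: "c k \<in> K"
  by (induction k)
     (simp_all add: b_in_K V_in_K e_in_K u_in_K subfield_diff subfield_mult subfield_power)

lemma fls_null_power_b:
  "fls_null (\<lambda>N. b (l + N * d) ^ (2 ^ k) - (c k + S_comb (V k) N))"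
proof (induction k)
  case 0
  have "S_comb (V 0) N = (\<Sum>r<d. S r N)" for N
    unfolding S_comb_def by (intro sum.cong) auto
  then show ?case by (simp add: b_decomposition fls_null_zero)
next
  case (Suc k)
  define D where "D N = b (l + N * d) ^ (2 ^ k) - (c k + S_comb (V k) N)" for N
  have "b (l + N * d) ^ (2 ^ Suc k) - (c (Suc k) + S_comb (V (Suc k)) N)
      = D N ^ 2 + V k (d - 1) ^ 2 * e (l + d) * u (l + 1 + N * d)" for N
  proof -
    have "b (l + N * d) ^ (2 ^ Suc k) = (c k + S_comb (V k) N + D N) ^ 2"
      by (simp add: D_def power_mult[symmetric] mult.commute)
    also have "\<dots> = c k ^ 2 + S_comb (V k) N ^ 2 + D N ^ 2"
      by (simp add: square_add_CHAR_2)
    finally show ?thesis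
      unfolding square_S_comb by (simp add: diff_eq_add_CHAR_2 two_eq_zero_CHAR_2 algebra_simps)
  qed
  moreover have "fls_null (\<lambda>N. D N ^ 2 + V k (d - 1) ^ 2 * e (l + d) * u (l + 1 + N * d))"
  proof (intro fls_null_add fls_null_power fls_null_mult_const)
    show "fls_null D"
      using Suc unfolding D_def .
    show "fls_null (\<lambda>N. u (l + 1 + N * d))"
      using d_pos by (intro fls_null_compose[OF fls_null_u] filterlim_arith_progression) simp
  qed simp
  ultimately show ?case by simp
qed

lemma fls_null_power_limit:
  assumes "fls_null (\<lambda>N. b (l + N * d) - \<beta>)"
  shows "fls_null (\<lambda>N. \<beta> ^ (2 ^ k) - (c k + S_comb (V k) N))"
proof -
  have "fls_null (\<lambda>N. (b (l + N * d) ^ (2 ^ k) - (c k + S_comb (V k) N)) - (b (l + N * d) - \<beta>) ^ (2 ^ k))"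
    using fls_null_diff[OF fls_null_power_b fls_null_power[OF assms]] by simp
  then show ?thesis
    by (simp add: power_two_power_diff_CHAR_2 algebra_simps)
qed

lemma inverse_relation:
  assumes "is_CF \<alpha> (\<lambda>i. laurent_of_poly (sword eps i))"
  shows "\<exists>A B. A \<in> K \<and> (\<forall>k<d. B k \<in> K)
      \<and> inverse \<alpha> ^ (2 ^ d) = A + (\<Sum>k<d. B k * inverse \<alpha> ^ (2 ^ k))"
proof -
  define \<beta> where "\<beta> = inverse \<alpha>"
  define R where "R k N = \<beta> ^ (2 ^ k) - (c k + S_comb (V k) N)" for k N
  have "fls_null (\<lambda>N. b (l + N * d) - \<beta>)"
    using d_pos unfolding \<beta>_def
    by (intro fls_null_compose[OF fls_null_b(2)[OF assms]] filterlim_arith_progression) simp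
  then have null_R: "fls_null (R k)" for k
    unfolding R_def by (rule fls_null_power_limit)
  obtain B where B: "\<forall>k<d. B k \<in> K" "V d = (\<lambda>r. \<Sum>k<d. B k * V k r)"
    using semilinear_orbit_relation[of twist V d] twist_lin_comb V_in_K V_support by auto
  define A where "A = c d - (\<Sum>k<d. B k * c k)"
  have "\<beta> ^ (2 ^ d) - (\<Sum>k<d. B k * \<beta> ^ (2 ^ k)) - A = R d N - (\<Sum>k<d. B k * R k N)" for N
  proof -
    have "(\<Sum>k<d. B k * R k N)
        = (\<Sum>k<d. B k * \<beta> ^ (2 ^ k)) - ((\<Sum>k<d. B k * c k) + (\<Sum>k<d. B k * S_comb (V k) N))"
      unfolding R_def by (simp add: right_diff_distrib distrib_left sum_subtractf sum.distrib)
    then show ?thesis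
      unfolding R_def A_def B(2) S_comb_lin_comb by (simp add: algebra_simps)
  qed
  moreover have "fls_null (\<lambda>N. R d N - (\<Sum>k<d. B k * R k N))"
    using null_R by (intro fls_null_diff fls_null_sum fls_null_mult_const)
  ultimately have "\<beta> ^ (2 ^ d) - (\<Sum>k<d. B k * \<beta> ^ (2 ^ k)) - A = 0"
    by (intro fls_null_const) simp
  moreover have "A \<in> K"
    unfolding A_def using B(1) by (auto intro!: subfield_diff subfield_sum subfield_mult c_in_K)
  ultimately show ?thesis
    using B(1) unfolding \<beta>_def by (auto simp: algebra_simps)
qed

end

section \<open>The algebraic equation\<close>

context subfield
begin

lemma reciprocal_poly_of_inverse_relation:
  fixes \<alpha> :: 'a
  assumes "\<alpha> \<noteq> 0" and "A \<in> K" and B: "\<forall>k<d. B k \<in> K"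
    and rel: "inverse \<alpha> ^ (2 ^ d) = A + (\<Sum>k<d. B k * inverse \<alpha> ^ (2 ^ k))"
  shows "\<exists>Q. (\<forall>i. coeff Q i \<in> K) \<and> Q \<noteq> 0 \<and> degree Q \<le> 2 ^ d \<and> poly Q \<alpha> = 0"
proof -
  have lt: "(2::nat) ^ k < 2 ^ d" if "k < d" for k
    using that by (rule power_strict_increasing) simp
  define Q where "Q = monom A (2 ^ d) + (\<Sum>k<d. monom (B k) (2 ^ d - 2 ^ k)) - 1"
  have coeff_Q: "coeff Q i = (if i = 2 ^ d then A else 0)
      + (\<Sum>k<d. if i = 2 ^ d - 2 ^ k then B k else 0) - of_bool (i = 0)" for i
    unfolding Q_def by (auto simp: coeff_sum intro!: sum.cong)
  have "coeff Q 0 = - 1"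
    unfolding coeff_Q using lt by (auto intro!: sum.neutral)
  then have "Q \<noteq> 0" by auto
  have "coeff Q i = 0" if "2 ^ d < i" for i
    unfolding coeff_Q using that by (auto intro!: sum.neutral)
  then have "degree Q \<le> 2 ^ d"
    by (meson degree_le leI)
  have "\<alpha> ^ (2 ^ d) * inverse \<alpha> ^ (2 ^ k) = \<alpha> ^ (2 ^ d - 2 ^ k)" if "k < d" for k
    using lt[OF that] \<open>\<alpha> \<noteq> 0\<close> by (simp add: power_diff power_inverse divide_inverse)
  then have "poly Q \<alpha> = \<alpha> ^ (2 ^ d) * (A + (\<Sum>k<d. B k * inverse \<alpha> ^ (2 ^ k))) - 1"
    unfolding Q_def
    by (simp add: poly_sum poly_monom algebra_simps sum_distrib_left)
  also have "\<dots> = 0"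
    unfolding rel[symmetric] using \<open>\<alpha> \<noteq> 0\<close> by (simp add: power_inverse)
  finally have "poly Q \<alpha> = 0" .
  moreover have "coeff Q i \<in> K" for i
    unfolding coeff_Q using \<open>A \<in> K\<close> B
    by (intro subfield_diff subfield_add subfield_sum)
       (auto simp: subfield_zero subfield_one)
  ultimately show ?thesis
    using \<open>Q \<noteq> 0\<close> \<open>degree Q \<le> 2 ^ d\<close> by blast
qed

lemma poly_pad_degree:
  assumes Q: "\<forall>i. coeff Q i \<in> K" "Q \<noteq> 0" "degree Q \<le> n" "poly Q \<alpha> = 0"
  shows "\<exists>P. (\<forall>i. coeff P i \<in> K) \<and> degree P = n \<and> poly P \<alpha> = 0"
proof (intro exI conjI allI)
  let ?P = "monom 1 (n - degree Q) * Q"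
  show "coeff ?P i \<in> K" for i
    unfolding coeff_monom_mult using Q(1) by (simp add: subfield_zero)
  show "degree ?P = n"
    using Q(2,3) by (simp add: degree_mult_eq degree_monom_eq)
  show "poly ?P \<alpha> = 0"
    using Q(4) by simp
qed

end

theorem mainTheorem1:
  fixes l d :: nat and eps :: "nat \<Rightarrow> bit poly" and \<alpha> :: "bit fls"
  assumes d_pos: "d \<ge> 1"
    and nonconst: "\<And>n. degree (eps n) > 0"
    and periodic: "\<And>n. n \<ge> l \<Longrightarrow> eps (n + d) = eps n"
    and alpha: "is_CF \<alpha> (\<lambda>i. laurent_of_poly (sword eps i))"
  shows "(\<exists>P :: bit fls poly.
            (\<forall>i. coeff P i \<in> gen_subfield (laurent_of_poly ` eps ` {..<l + d}))
            \<and> degree P = 2 ^ d \<and> poly P \<alpha> = 0)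
       \<and> (\<exists>A B. A \<in> gen_subfield (laurent_of_poly ` eps ` {..<l + d})
            \<and> (\<forall>k<d. B k \<in> gen_subfield (laurent_of_poly ` eps ` {..<l + d}))
            \<and> (inverse \<alpha>) ^ (2 ^ d) = A + (\<Sum>k<d. B k * (inverse \<alpha>) ^ (2 ^ k)))"
proof -
  interpret ultimately_periodic_quotients eps l d
    using assms by unfold_locales
  obtain A B where rel: "A \<in> K" "\<forall>k<d. B k \<in> K"
      "inverse \<alpha> ^ (2 ^ d) = A + (\<Sum>k<d. B k * inverse \<alpha> ^ (2 ^ k))"
    using inverse_relation[OF alpha] by blast
  obtain Q where "\<forall>i. coeff Q i \<in> K" "Q \<noteq> 0" "degree Q \<le> 2 ^ d" "poly Q \<alpha> = 0"
    using reciprocal_poly_of_inverse_relation[OF fls_null_b(1)[OF alpha] rel] by blast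
  with poly_pad_degree have "\<exists>P. (\<forall>i. coeff P i \<in> K) \<and> degree P = 2 ^ d \<and> poly P \<alpha> = 0"
    by blast
  with rel show ?thesis
    unfolding K_def by blast
qed

end
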